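(* In the AGARCH setting of the context, suppose the distribution of $Z_0$ is not concentrated at two points. Then for any $\theta=(\alpha_0,\dots,\alpha_p,\beta_1,\dots,\beta_q,\gamma)^T\in K$, the relation $h_0(\theta)=h_0(\theta_0)$ a.s. implies $\gamma=\gamma^\circ$.
   Context: $(Z_t)$ i.i.d., $\mathbb EZ_0=0$, $\mathbb EZ_0^2=1$, $\mathcal F_t=\sigma(Z_k:k\le t)$. $((X_t,\sigma_t))$ is the unique strictly stationary ergodic solution of the AGARCH$(p,q)$ equations $X_t=\sigma_tZ_t$, $\sigma_t^2=\alpha_0^\circ+\sum_{i=1}^p\alpha_i^\circ(|X_{t-i}|-\gamma^\circ X_{t-i})^2+\sum_{j=1}^q\beta_j^\circ\sigma_{t-j}^2$ ($\sigma_t$ $\mathcal F_{t-1}$-measurable), true parameter $\theta_0=(\alpha_0^\circ,\dots,\alpha_p^\circ,\beta_1^\circ,\dots,\beta_q^\circ,\gamma^\circ)^T$ with $\alpha_0^\circ>0$, $\alpha_i^\circ,\beta_j^\circ\ge0$, $|\gamma^\circ|\le1$, $\alpha_i^\circ>0$ for some $i\ge1$ and $(\alpha_p^\circ,\beta_q^\circ)\ne(0,0)$. $K$ is a compact subset of $(0,\infty)\times[0,\infty)^p\times B\times[-1,1]$ containing $\theta_0$, $B=\{(\beta_1,\dots,\beta_q)^T\in[0,1)^q:\sum_j\beta_j<1\}$. $(\mathbf h_t)$, $\mathbf h_t=(h_t,\dots,h_{t-q+1})^T$, is the unique stationary ergodic sequence in $\mathbb C(K,[0,\infty)^q)$ with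 $h_t(\theta)=\alpha_0+\sum_{i=1}^p\alpha_i(|X_{t-i}|-\gamma X_{t-i})^2+\sum_{j=1}^q\beta_jh_{t-j}(\theta)$; equivalently $h_t(\theta)=\alpha_0(1-\sum_j\beta_j)^{-1}+\sum_{\ell\ge1}\xi_\ell(\theta)(|X_{t-\ell}|-\gamma X_{t-\ell})^2$ with $\sum_{\ell\ge1}\xi_\ell(\theta)z^\ell=(\sum_i\alpha_iz^i)/(1-\sum_j\beta_jz^j)$, and $h_t(\theta_0)=\sigma_t^2$ a.s. *)

theory Defs
  imports "HOL-Probability.Probability" "HOL-Computational_Algebra.Formal_Power_Series"
begin

text \<open>A parameter theta = (alpha_0,...,alpha_p, beta_1,...,beta_q, gamma) is encoded as a triple
  (a, b, g) with a i = alpha_i (i = 0..p), b j = beta_j (j = 1..q), g = gamma; unused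
  coordinates are normalised to 0 (a i = 0 for i > p, b 0 = 0, b j = 0 for j > q), so that the
  parameter space is homeomorphic to the paper's
  (0,inf) x [0,inf)^p x B x [-1,1] inside the product topology.\<close>

type_synonym agarch_param = "(nat \<Rightarrow> real) \<times> (nat \<Rightarrow> real) \<times> real"

definition agarch_param_space :: "nat \<Rightarrow> nat \<Rightarrow> agarch_param set" where
  "agarch_param_space p q =
     {(a, b, g). a 0 > 0 \<and> (\<forall>i\<in>{1..p}. a i \<ge> 0) \<and> (\<forall>i>p. a i = 0)
        \<and> b 0 = 0 \<and> (\<forall>j\<in>{1..q}. b j \<ge> 0) \<and> (\<forall>j>q. b j = 0)
        \<and> (\<Sum>j=1..q. b j) < 1 \<and> \<bar>g\<bar> \<le> 1}"

definition agarch_xi :: "nat \<Rightarrow> nat \<Rightarrow> agarch_param \<Rightarrow> nat \<Rightarrow> real" where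
  "agarch_xi p q \<theta> l =
     (case \<theta> of (a, b, g) \<Rightarrow>
        fps_nth (Abs_fps (\<lambda>i. if 1 \<le> i \<and> i \<le> p then a i else 0)
                 / (1 - Abs_fps (\<lambda>j. if 1 \<le> j \<and> j \<le> q then b j else 0))) l)"

definition agarch_h :: "nat \<Rightarrow> nat \<Rightarrow> (int \<Rightarrow> 'w \<Rightarrow> real) \<Rightarrow> agarch_param \<Rightarrow> int \<Rightarrow> 'w \<Rightarrow> ennreal" where
  "agarch_h p q X \<theta> t \<omega> =
     (case \<theta> of (a, b, g) \<Rightarrow>
        ennreal (a 0 / (1 - (\<Sum>j=1..q. b j)))
        + (\<Sum>l. ennreal (agarch_xi p q \<theta> (Suc l)
                 * (\<bar>X (t - int (Suc l)) \<omega>\<bar> - g * X (t - int (Suc l)) \<omega>)\<^sup>2)))"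

definition natural_filtration :: "'w measure \<Rightarrow> (int \<Rightarrow> 'w \<Rightarrow> real) \<Rightarrow> int \<Rightarrow> 'w measure" where
  "natural_filtration M Z t =
     sigma (space M) (\<Union>k\<in>{..t}. {Z k -` B \<inter> space M | B. B \<in> sets borel})"

definition path_law :: "'w measure \<Rightarrow> (int \<Rightarrow> 'w \<Rightarrow> 'b::topological_space) \<Rightarrow> (int \<Rightarrow> 'b) measure" where
  "path_law M Y = distr M (PiM UNIV (\<lambda>_. borel)) (\<lambda>\<omega> t. Y t \<omega>)"

definition path_shift :: "(int \<Rightarrow> 'b) \<Rightarrow> int \<Rightarrow> 'b" where
  "path_shift f = (\<lambda>t. f (t + 1))"

definition strictly_stationary :: "'w measure \<Rightarrow> (int \<Rightarrow> 'w \<Rightarrow> 'b::topological_space) \<Rightarrow> bool" where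
  "strictly_stationary M Y \<longleftrightarrow> path_law M (\<lambda>t. Y (t + 1)) = path_law M Y"

definition ergodic_process :: "'w measure \<Rightarrow> (int \<Rightarrow> 'w \<Rightarrow> 'b::topological_space) \<Rightarrow> bool" where
  "ergodic_process M Y \<longleftrightarrow>
     (\<forall>A \<in> sets (PiM (UNIV::int set) (\<lambda>_. (borel :: 'b measure))).
        path_shift -` A = A \<longrightarrow>
          emeasure (path_law M Y) A = 0 \<or> emeasure (path_law M Y) A = 1)"

end

theory Submission
  imports Defs
begin

text \<open>Let k + 1 be the first lag at which \<xi>(\<theta>) or \<xi>(\<theta>_0) is positive and put t = -(k + 1).
  Splitting off this term, h_0(\<theta>) = \<xi>_(k+1)(\<theta>) (|\<sigma>_t Z_t| - \<gamma> \<sigma>_t Z_t)^2 + R(\<theta>), where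
  \<sigma>_t > 0 and the remainders R(\<theta>), R(\<theta>_0) are F_(t-1)-measurable, and R(\<theta>_0) is finite because
  \<sigma>_0^2 dominates every partial sum of the ARCH(\<infinity>) expansion. As Z_t is independent of
  F_(t-1) and distributed like Z_0, the identity h_0(\<theta>) = h_0(\<theta>_0) leaves constants s > 0
  and C with A (|s z| - \<gamma> s z)^2 - B (|s z| - \<gamma>_0 s z)^2 = C for almost every value z of Z_0,
  where A, B \<ge> 0 are not both zero. On each half-line the left side is z^2 times a constant.
  Being centred and not concentrated on two points, Z_0 takes a positive, a negative and a third
  value, so both constants vanish: A (1 - \<gamma>)^2 = B (1 - \<gamma>_0)^2 and A (1 + \<gamma>)^2 = B (1 + \<gamma>_0)^2,
  whence A = B > 0 and \<gamma> = \<gamma>_0.\<close>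

lemma agarch_param_spaceD:
  assumes "(a, b, g) \<in> agarch_param_space p q"
  shows "a 0 > 0" and "\<forall>i\<in>{1..p}. a i \<ge> 0" and "\<forall>j\<in>{1..q}. b j \<ge> 0" and "\<bar>g\<bar> \<le> 1"
  using assms by (auto simp: agarch_param_space_def)

lemma agarch_xi_rec:
  "agarch_xi p q (a, b, g) l =
     (if 1 \<le> l \<and> l \<le> p then a l else 0)
     + (\<Sum>j=1..l. (if 1 \<le> j \<and> j \<le> q then b j else 0) * agarch_xi p q (a, b, g) (l - j))"
proof -
  define A where "A = Abs_fps (\<lambda>i. if 1 \<le> i \<and> i \<le> p then a i else 0)"
  define B where "B = Abs_fps (\<lambda>j. if 1 \<le> j \<and> j \<le> q then b j else 0 :: real)"
  define F where "F = A / (1 - B)"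
  have xi: "agarch_xi p q (a, b, g) = fps_nth F"
    unfolding agarch_xi_def F_def A_def B_def by auto
  have "F * (1 - B) = A"
    unfolding F_def by (simp add: B_def fps_divide_unit mult.assoc inverse_mult_eq_1)
  then have "F = A + B * F"
    by (simp add: algebra_simps)
  then have "fps_nth F l = fps_nth A l + (\<Sum>j=0..l. fps_nth B j * fps_nth F (l - j))"
    by (metis fps_add_nth fps_mult_nth)
  also have "(\<Sum>j=0..l. fps_nth B j * fps_nth F (l - j)) = (\<Sum>j=1..l. fps_nth B j * fps_nth F (l - j))"
    by (simp add: sum.atLeast_Suc_atMost B_def)
  finally show ?thesis
    unfolding xi by (simp add: A_def B_def)
qed

lemma agarch_xi_0: "agarch_xi p q (a, b, g) 0 = 0"
  by (subst agarch_xi_rec) simp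

lemma agarch_xi_nonneg:
  assumes "\<forall>i\<in>{1..p}. a i \<ge> 0" and "\<forall>j\<in>{1..q}. b j \<ge> 0"
  shows "agarch_xi p q (a, b, g) l \<ge> 0"
proof (induction l rule: less_induct)
  case (less l)
  show ?case
    using assms less by (subst agarch_xi_rec) (auto intro!: add_nonneg_nonneg sum_nonneg mult_nonneg_nonneg)
qed

lemma agarch_xi_ge_alpha:
  assumes "\<forall>i\<in>{1..p}. a i \<ge> 0" and "\<forall>j\<in>{1..q}. b j \<ge> 0" and "i \<in> {1..p}"
  shows "agarch_xi p q (a, b, g) i \<ge> a i"
  using assms agarch_xi_nonneg[OF assms(1,2)]
  by (subst agarch_xi_rec) (auto intro!: sum_nonneg mult_nonneg_nonneg)

lemma agarch_xi_first_positive: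
  assumes \<theta>: "(a, b, g) \<in> agarch_param_space p q" and \<theta>': "(a', b', g') \<in> agarch_param_space p q"
    and "\<exists>i\<in>{1..p}. a' i > 0"
  obtains k where "agarch_xi p q (a, b, g) (Suc k) > 0 \<or> agarch_xi p q (a', b', g') (Suc k) > 0"
    and "\<forall>m<k. agarch_xi p q (a, b, g) (Suc m) = 0 \<and> agarch_xi p q (a', b', g') (Suc m) = 0"
proof -
  let ?pos = "\<lambda>m. agarch_xi p q (a, b, g) (Suc m) > 0 \<or> agarch_xi p q (a', b', g') (Suc m) > 0"
  have nonneg: "agarch_xi p q (a, b, g) l \<ge> 0" "agarch_xi p q (a', b', g') l \<ge> 0" for l
    using agarch_xi_nonneg agarch_param_spaceD(2,3)[OF \<theta>] agarch_param_spaceD(2,3)[OF \<theta>'] by blast+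
  obtain i where "i \<in> {1..p}" and "a' i > 0"
    using assms(3) by blast
  then have "agarch_xi p q (a', b', g') (Suc (i - 1)) > 0"
    using agarch_xi_ge_alpha[OF agarch_param_spaceD(2,3)[OF \<theta>'], of i g'] by simp
  then have "?pos (LEAST m. ?pos m)"
    by (intro LeastI) blast
  moreover have "agarch_xi p q (a, b, g) (Suc m) = 0 \<and> agarch_xi p q (a', b', g') (Suc m) = 0"
    if "m < (LEAST m. ?pos m)" for m
    using not_less_Least[OF that] nonneg[of "Suc m"] by (auto intro: order.antisym simp: not_less)
  ultimately show thesis
    using that by blast
qed

section \<open>Finiteness of the volatility\<close>

lemma sum_triangle_swap:
  fixes n :: nat
  shows "(\<Sum>l=1..n. \<Sum>j=1..l. f j l) = (\<Sum>j=1..n. \<Sum>l=j..n. f j l)"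
proof (induction n)
  case (Suc n)
  have "(\<Sum>j=1..Suc n. \<Sum>l=j..Suc n. f j l) = (\<Sum>j=1..Suc n. (\<Sum>l=j..n. f j l) + f j (Suc n))"
    by (intro sum.cong) auto
  then show ?case
    using Suc by (simp add: sum.distrib)
qed simp

lemma sum_le_of_vanishing_beyond:
  fixes f :: "nat \<Rightarrow> 'a::ordered_comm_monoid_add"
  assumes "\<And>i. f i \<ge> 0" and "\<And>i. i > p \<Longrightarrow> f i = 0"
  shows "(\<Sum>i=1..n. f i) \<le> (\<Sum>i=1..p. f i)"
proof -
  have "(\<Sum>i=1..n. f i) \<le> (\<Sum>i=1..max n p. f i)"
    using assms by (intro sum_mono2) auto
  also have "\<dots> = (\<Sum>i=1..p. f i)"
    using assms by (intro sum.mono_neutral_right) auto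
  finally show ?thesis .
qed

lemma partial_arch_expansion_le:
  fixes \<xi> \<alpha> \<beta> :: "nat \<Rightarrow> real" and Y S :: "int \<Rightarrow> real"
  assumes rec: "\<And>l. \<xi> l = \<alpha> l + (\<Sum>j=1..l. \<beta> j * \<xi> (l - j))" and \<xi>_0: "\<xi> 0 = 0"
    and nonneg: "\<And>l. \<xi> l \<ge> 0" "\<And>j. \<beta> j \<ge> 0" "\<And>i. \<alpha> i \<ge> 0" "\<And>t. Y t \<ge> 0" "\<And>t. S t \<ge> 0"
    and vanish: "\<And>i. i > p \<Longrightarrow> \<alpha> i = 0" "\<And>j. j > q \<Longrightarrow> \<beta> j = 0"
    and super: "\<And>t. S t \<ge> (\<Sum>i=1..p. \<alpha> i * Y (t - int i)) + (\<Sum>j=1..q. \<beta> j * S (t - int j))"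
  shows "(\<Sum>l=1..n. \<xi> l * Y (t - int l)) \<le> S t"
proof (induction n arbitrary: t)
  case 0
  then show ?case using nonneg by simp
next
  case (Suc n)
  have IH: "(\<Sum>l=1..m. \<xi> l * Y (s - int l)) \<le> S s" if "m \<le> n" for m s
  proof -
    have "(\<Sum>l=1..m. \<xi> l * Y (s - int l)) \<le> (\<Sum>l=1..n. \<xi> l * Y (s - int l))"
      using that nonneg by (intro sum_mono2) auto
    also have "\<dots> \<le> S s" by (rule Suc.IH)
    finally show ?thesis .
  qed
  have "(\<Sum>l=1..Suc n. \<xi> l * Y (t - int l)) =
        (\<Sum>l=1..Suc n. \<alpha> l * Y (t - int l)) + (\<Sum>l=1..Suc n. \<Sum>j=1..l. \<beta> j * \<xi> (l - j) * Y (t - int l))"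
    by (subst rec) (simp add: distrib_right sum_distrib_right sum.distrib)
  also have "(\<Sum>l=1..Suc n. \<alpha> l * Y (t - int l)) \<le> (\<Sum>i=1..p. \<alpha> i * Y (t - int i))"
    using nonneg vanish by (intro sum_le_of_vanishing_beyond) auto
  also have "(\<Sum>l=1..Suc n. \<Sum>j=1..l. \<beta> j * \<xi> (l - j) * Y (t - int l))
           = (\<Sum>j=1..Suc n. \<beta> j * (\<Sum>m=1..Suc n - j. \<xi> m * Y ((t - int j) - int m)))"
  proof -
    have inner: "(\<Sum>l=j..Suc n. \<beta> j * \<xi> (l - j) * Y (t - int l))
        = \<beta> j * (\<Sum>m=1..Suc n - j. \<xi> m * Y ((t - int j) - int m))" if "j \<in> {1..Suc n}" for j
    proof -
      have "{j..Suc n} = {0 + j..(Suc n - j) + j}" using that by auto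
      then show ?thesis
        by (simp only: sum.shift_bounds_cl_nat_ivl)
          (simp add: sum_distrib_left sum.atLeast_Suc_atMost \<xi>_0 algebra_simps)
    qed
    show ?thesis
      unfolding sum_triangle_swap by (rule sum.cong[OF refl inner])
  qed
  also have "\<dots> \<le> (\<Sum>j=1..Suc n. \<beta> j * S (t - int j))"
    using nonneg IH by (intro sum_mono mult_left_mono) auto
  also have "\<dots> \<le> (\<Sum>j=1..q. \<beta> j * S (t - int j))"
    using nonneg vanish by (intro sum_le_of_vanishing_beyond) auto
  finally show ?case
    using super[of t] by linarith
qed

lemma agarch_h_finite:
  fixes X \<sigma> :: "int \<Rightarrow> 'w \<Rightarrow> real"
  assumes a: "a 0 \<ge> 0" "\<forall>i\<in>{1..p}. a i \<ge> 0" and b: "\<forall>j\<in>{1..q}. b j \<ge> 0"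
    and eq: "\<forall>t. (\<sigma> t \<omega>)\<^sup>2 = a 0 + (\<Sum>i=1..p. a i * (\<bar>X (t - int i) \<omega>\<bar> - g * X (t - int i) \<omega>)\<^sup>2)
                      + (\<Sum>j=1..q. b j * (\<sigma> (t - int j) \<omega>)\<^sup>2)"
  shows "agarch_h p q X (a, b, g) 0 \<omega> < \<infinity>"
proof -
  define \<xi> where "\<xi> = agarch_xi p q (a, b, g)"
  define Y where "Y = (\<lambda>t. (\<bar>X t \<omega>\<bar> - g * X t \<omega>)\<^sup>2)"
  have \<xi>_nonneg: "\<xi> l \<ge> 0" for l
    unfolding \<xi>_def using a(2) b by (rule agarch_xi_nonneg)
  have partial: "(\<Sum>l=1..n. \<xi> l * Y (0 - int l)) \<le> (\<sigma> 0 \<omega>)\<^sup>2" for n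
  proof (rule partial_arch_expansion_le[where p = p and q = q])
    show "\<xi> l = (if 1 \<le> l \<and> l \<le> p then a l else 0)
        + (\<Sum>j=1..l. (if 1 \<le> j \<and> j \<le> q then b j else 0) * \<xi> (l - j))" for l
      unfolding \<xi>_def by (rule agarch_xi_rec)
    show "(\<sigma> t \<omega>)\<^sup>2 \<ge> (\<Sum>i=1..p. (if 1 \<le> i \<and> i \<le> p then a i else 0) * Y (t - int i))
        + (\<Sum>j=1..q. (if 1 \<le> j \<and> j \<le> q then b j else 0) * (\<sigma> (t - int j) \<omega>)\<^sup>2)" for t
    proof -
      have "(\<Sum>i=1..p. (if 1 \<le> i \<and> i \<le> p then a i else 0) * Y (t - int i)) = (\<Sum>i=1..p. a i * Y (t - int i))"
        "(\<Sum>j=1..q. (if 1 \<le> j \<and> j \<le> q then b j else 0) * (\<sigma> (t - int j) \<omega>)\<^sup>2)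
           = (\<Sum>j=1..q. b j * (\<sigma> (t - int j) \<omega>)\<^sup>2)"
        by (auto intro: sum.cong)
      then show ?thesis
        using eq[rule_format, of t] a(1) unfolding Y_def by linarith
    qed
  qed (use \<xi>_nonneg a b in \<open>auto simp: \<xi>_def agarch_xi_0 Y_def\<close>)
  have "(\<Sum>l. ennreal (\<xi> (Suc l) * Y (0 - int (Suc l)))) \<le> ennreal ((\<sigma> 0 \<omega>)\<^sup>2)"
  proof (rule suminf_le_const)
    fix n
    have "(\<Sum>l<n. ennreal (\<xi> (Suc l) * Y (0 - int (Suc l)))) = ennreal (\<Sum>l=1..n. \<xi> l * Y (0 - int l))"
      using \<xi>_nonneg by (simp add: sum.atLeast1_atMost_eq Y_def flip: sum_ennreal)
    also have "\<dots> \<le> ennreal ((\<sigma> 0 \<omega>)\<^sup>2)"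
      using partial by (rule ennreal_leI)
    finally show "(\<Sum>l<n. ennreal (\<xi> (Suc l) * Y (0 - int (Suc l)))) \<le> ennreal ((\<sigma> 0 \<omega>)\<^sup>2)" .
  qed simp
  then have "agarch_h p q X (a, b, g) 0 \<omega> \<le> ennreal (a 0 / (1 - (\<Sum>j=1..q. b j))) + ennreal ((\<sigma> 0 \<omega>)\<^sup>2)"
    unfolding agarch_h_def \<xi>_def Y_def by (simp add: add_left_mono)
  also have "\<dots> < \<infinity>"
    by (simp flip: ennreal_plus)
  finally show ?thesis .
qed

lemma agarch_sigma_pos:
  fixes X \<sigma> :: "int \<Rightarrow> 'w \<Rightarrow> real"
  assumes "\<sigma> t \<omega> \<ge> 0" and "a 0 > 0" and "\<forall>i\<in>{1..p}. a i \<ge> 0" and "\<forall>j\<in>{1..q}. b j \<ge> 0"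
    and eq: "(\<sigma> t \<omega>)\<^sup>2 = a 0 + (\<Sum>i=1..p. a i * (\<bar>X (t - int i) \<omega>\<bar> - g * X (t - int i) \<omega>)\<^sup>2)
                         + (\<Sum>j=1..q. b j * (\<sigma> (t - int j) \<omega>)\<^sup>2)"
  shows "\<sigma> t \<omega> > 0"
proof -
  have "(\<Sum>i=1..p. a i * (\<bar>X (t - int i) \<omega>\<bar> - g * X (t - int i) \<omega>)\<^sup>2) \<ge> 0"
    and "(\<Sum>j=1..q. b j * (\<sigma> (t - int j) \<omega>)\<^sup>2) \<ge> 0"
    using assms(3,4) by (auto intro!: sum_nonneg mult_nonneg_nonneg)
  then have "(\<sigma> t \<omega>)\<^sup>2 > 0"
    using eq \<open>a 0 > 0\<close> by linarith
  then show ?thesis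
    using \<open>\<sigma> t \<omega> \<ge> 0\<close> by (simp add: less_le)
qed

definition agarch_h_tail :: "nat \<Rightarrow> nat \<Rightarrow> (int \<Rightarrow> 'w \<Rightarrow> real) \<Rightarrow> agarch_param \<Rightarrow> nat \<Rightarrow> 'w \<Rightarrow> ennreal" where
  "agarch_h_tail p q X \<theta> k \<omega> =
     (case \<theta> of (a, b, g) \<Rightarrow>
        ennreal (a 0 / (1 - (\<Sum>j=1..q. b j)))
        + (\<Sum>l. ennreal (agarch_xi p q \<theta> (l + Suc (Suc k))
                 * (\<bar>X (- int (l + Suc (Suc k))) \<omega>\<bar> - g * X (- int (l + Suc (Suc k))) \<omega>)\<^sup>2)))"

lemma agarch_h_split:
  assumes "\<forall>m<k. agarch_xi p q (a, b, g) (Suc m) = 0"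
  shows "agarch_h p q X (a, b, g) 0 \<omega> =
    ennreal (agarch_xi p q (a, b, g) (Suc k)
             * (\<bar>X (- int (Suc k)) \<omega>\<bar> - g * X (- int (Suc k)) \<omega>)\<^sup>2)
    + agarch_h_tail p q X (a, b, g) k \<omega>"
proof -
  define T where "T l = ennreal (agarch_xi p q (a, b, g) (Suc l)
                 * (\<bar>X (- int (Suc l)) \<omega>\<bar> - g * X (- int (Suc l)) \<omega>)\<^sup>2)" for l
  have h: "agarch_h p q X (a, b, g) 0 \<omega> = ennreal (a 0 / (1 - (\<Sum>j=1..q. b j))) + suminf T"
    unfolding agarch_h_def T_def by simp
  have tail: "agarch_h_tail p q X (a, b, g) k \<omega>
      = ennreal (a 0 / (1 - (\<Sum>j=1..q. b j))) + (\<Sum>l. T (l + Suc k))"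
    unfolding agarch_h_tail_def T_def by simp
  have "suminf T = (\<Sum>l. T (l + Suc k)) + (\<Sum>l<Suc k. T l)"
    by (rule suminf_offset) simp
  also have "(\<Sum>l<Suc k. T l) = T k"
    using assms by (simp add: T_def)
  finally show ?thesis
    unfolding h tail T_def by (simp only: ac_simps)
qed

lemma agarch_first_lag_identity:
  fixes X \<sigma> Z :: "int \<Rightarrow> 'w \<Rightarrow> real"
  assumes \<theta>0: "(a0, b0, g0) \<in> agarch_param_space p q"
    and before: "\<forall>m<k. agarch_xi p q (a, b, g) (Suc m) = 0 \<and> agarch_xi p q (a0, b0, g0) (Suc m) = 0"
    and X: "\<forall>t. X t \<omega> = \<sigma> t \<omega> * Z t \<omega>" and \<sigma>_nonneg: "\<forall>t. \<sigma> t \<omega> \<ge> 0"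
    and \<sigma>_eq: "\<forall>t. (\<sigma> t \<omega>)\<^sup>2 =
                 a0 0 + (\<Sum>i=1..p. a0 i * (\<bar>X (t - int i) \<omega>\<bar> - g0 * X (t - int i) \<omega>)\<^sup>2)
                      + (\<Sum>j=1..q. b0 j * (\<sigma> (t - int j) \<omega>)\<^sup>2)"
    and h_eq: "agarch_h p q X (a, b, g) 0 \<omega> = agarch_h p q X (a0, b0, g0) 0 \<omega>"
  defines "Y \<equiv> \<lambda>t \<omega>. \<sigma> t \<omega> * Z t \<omega>" and "s \<equiv> \<sigma> (- int (Suc k)) \<omega>" and "z \<equiv> Z (- int (Suc k)) \<omega>"
  shows "s > 0 \<and> agarch_h_tail p q Y (a0, b0, g0) k \<omega> < \<infinity> \<and>
      ennreal (agarch_xi p q (a, b, g) (Suc k) * (\<bar>s * z\<bar> - g * (s * z))\<^sup>2) + agarch_h_tail p q Y (a, b, g) k \<omega>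
    = ennreal (agarch_xi p q (a0, b0, g0) (Suc k) * (\<bar>s * z\<bar> - g0 * (s * z))\<^sup>2) + agarch_h_tail p q Y (a0, b0, g0) k \<omega>"
proof -
  note \<theta>0D = agarch_param_spaceD[OF \<theta>0]
  have split: "agarch_h p q X (a', b', g') 0 \<omega> =
      ennreal (agarch_xi p q (a', b', g') (Suc k) * (\<bar>s * z\<bar> - g' * (s * z))\<^sup>2) + agarch_h_tail p q Y (a', b', g') k \<omega>"
    if "\<forall>m<k. agarch_xi p q (a', b', g') (Suc m) = 0" for a' b' g'
  proof -
    have "agarch_h p q X (a', b', g') 0 \<omega> = agarch_h p q Y (a', b', g') 0 \<omega>"
      using X by (simp add: agarch_h_def Y_def)
    then show ?thesis
      using agarch_h_split[OF that, of Y] by (simp add: Y_def s_def z_def)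
  qed
  have "agarch_h p q X (a0, b0, g0) 0 \<omega> < \<infinity>"
    using agarch_h_finite[where X = X and \<sigma> = \<sigma>, OF less_imp_le[OF \<theta>0D(1)] \<theta>0D(2,3) \<sigma>_eq] .
  then have "agarch_h_tail p q Y (a0, b0, g0) k \<omega> < \<infinity>"
    using split[of a0 b0 g0] before by (simp add: less_top[symmetric] ennreal_add_eq_top)
  moreover have "s > 0"
    unfolding s_def
    using agarch_sigma_pos[where \<sigma> = \<sigma> and X = X and \<omega> = \<omega>, OF _ \<theta>0D(1-3) \<sigma>_eq[rule_format]] \<sigma>_nonneg
    by blast
  ultimately show ?thesis
    using h_eq split[of a b g] split[of a0 b0 g0] before by simp
qed

lemma space_natural_filtration [simp]: "space (natural_filtration M Z t) = space M"
  unfolding natural_filtration_def by (simp add: space_measure_of_conv)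

lemma sets_natural_filtration:
  "sets (natural_filtration M Z t) =
     sigma_sets (space M) (\<Union>k\<in>{..t}. {Z k -` B \<inter> space M | B. B \<in> sets borel})"
  unfolding natural_filtration_def by (rule sets_measure_of) auto

lemma subalgebra_natural_filtration:
  assumes "\<And>k. Z k \<in> borel_measurable M"
  shows "subalgebra M (natural_filtration M Z t)"
  unfolding subalgebra_def sets_natural_filtration
  using assms by (auto intro!: sets.sigma_sets_subset measurable_sets)

lemma natural_filtration_mono:
  assumes "s \<le> t"
  shows "subalgebra (natural_filtration M Z t) (natural_filtration M Z s)"
  unfolding subalgebra_def sets_natural_filtration space_natural_filtration
  using assms by (intro conjI refl sigma_sets_mono subsetI sigma_sets.Basic) (fastforce intro: order_trans)

lemma measurable_natural_filtration:
  assumes "k \<le> t"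
  shows "Z k \<in> borel_measurable (natural_filtration M Z t)"
  unfolding measurable_def sets_natural_filtration space_natural_filtration
  using assms by (auto intro: sigma_sets.Basic)

lemma measurable_agarch_h_tail:
  assumes adapted: "\<forall>t. \<sigma> t \<in> borel_measurable (natural_filtration M Z (t - 1))"
  shows "agarch_h_tail p q (\<lambda>t \<omega>. \<sigma> t \<omega> * Z t \<omega>) \<theta> k
           \<in> borel_measurable (natural_filtration M Z (- int (Suc k) - 1))"
proof -
  have [measurable]: "\<sigma> (- int (l + Suc (Suc k))) \<in> borel_measurable (natural_filtration M Z (- int (Suc k) - 1))"
    for l
  proof (rule measurable_from_subalg)
    show "subalgebra (natural_filtration M Z (- int (Suc k) - 1))
            (natural_filtration M Z (- int (l + Suc (Suc k)) - 1))"
      by (rule natural_filtration_mono) simp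
  qed (use adapted in blast)
  have [measurable]: "Z (- int (l + Suc (Suc k))) \<in> borel_measurable (natural_filtration M Z (- int (Suc k) - 1))"
    for l
    by (rule measurable_natural_filtration) simp
  show ?thesis
    unfolding agarch_h_tail_def by (cases \<theta>) measurable
qed

lemma (in prob_space) indep_set_natural_filtration:
  assumes indep: "indep_vars (\<lambda>_. borel) Z UNIV" and "s < t"
  shows "indep_set (sets (natural_filtration M Z s)) {Z t -` B \<inter> space M | B. B \<in> sets borel}"
proof -
  define E where "E k = {Z k -` B \<inter> space M | B. B \<in> sets (borel :: real measure)}" for k
  define I where "I b = (if b then {..s} else {t})" for b
  have "indep_sets (\<lambda>b. sigma_sets (space M) (\<Union>k\<in>I b. E k)) UNIV"
  proof (rule indep_sets_collect_sigma)
    show "indep_sets E (\<Union>b\<in>UNIV. I b)"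
      using indep unfolding indep_vars_def2 E_def by (auto intro: indep_sets_mono_index)
    show "Int_stable (E k)" for k
    proof (rule Int_stableI)
      fix x y assume "x \<in> E k" "y \<in> E k"
      then obtain A B where "A \<in> sets borel" "B \<in> sets borel"
        and "x = Z k -` A \<inter> space M" "y = Z k -` B \<inter> space M"
        unfolding E_def by auto
      then show "x \<inter> y \<in> E k"
        unfolding E_def by (intro CollectI exI[of _ "A \<inter> B"]) auto
    qed
    show "disjoint_family_on I UNIV"
      using \<open>s < t\<close> by (auto simp: disjoint_family_on_def I_def)
  qed
  then show ?thesis
    unfolding indep_set_def
    by (rule indep_sets_mono_sets)
      (auto simp: I_def E_def sets_natural_filtration split: bool.split intro: sigma_sets.Basic)
qed

text \<open>Unlike indep_var, this allows W and V to take values in different types.\<close>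

lemma (in prob_space) distr_pair_eq_of_indep_set:
  assumes W: "random_variable N W" and V: "random_variable N' V" and indep: "indep_set F G"
    and W_F: "\<And>A. A \<in> sets N \<Longrightarrow> W -` A \<inter> space M \<in> F"
    and V_G: "\<And>B. B \<in> sets N' \<Longrightarrow> V -` B \<inter> space M \<in> G"
  shows "distr M N W \<Otimes>\<^sub>M distr M N' V = distr M (N \<Otimes>\<^sub>M N') (\<lambda>\<omega>. (W \<omega>, V \<omega>))"
proof -
  interpret DW: prob_space "distr M N W" using W by (rule prob_space_distr)
  interpret DV: prob_space "distr M N' V" using V by (rule prob_space_distr)
  show ?thesis
  proof (rule pair_measure_eqI)
    fix A B assume A: "A \<in> sets (distr M N W)" and B: "B \<in> sets (distr M N' V)"
    have "emeasure (distr M (N \<Otimes>\<^sub>M N') (\<lambda>\<omega>. (W \<omega>, V \<omega>))) (A \<times> B)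
        = prob ((W -` A \<inter> space M) \<inter> (V -` B \<inter> space M))"
      using A B W V by (subst emeasure_distr) (auto intro: measurable_Pair simp: emeasure_eq_measure
          intro!: arg_cong[where f = prob])
    also have "\<dots> = prob (W -` A \<inter> space M) * prob (V -` B \<inter> space M)"
      using A B by (simp add: indep_setD[OF indep W_F V_G])
    finally show "emeasure (distr M N W) A * emeasure (distr M N' V) B
        = emeasure (distr M (N \<Otimes>\<^sub>M N') (\<lambda>\<omega>. (W \<omega>, V \<omega>))) (A \<times> B)"
      using A B W V by (simp add: emeasure_distr emeasure_eq_measure ennreal_mult)
  qed (simp_all add: DW.sigma_finite_measure DV.sigma_finite_measure)
qed

lemma (in prob_space) AE_section_of_independent:
  assumes W: "random_variable N W" and V: "random_variable N' V"
    and joint: "distr M N W \<Otimes>\<^sub>M distr M N' V = distr M (N \<Otimes>\<^sub>M N') (\<lambda>\<omega>. (W \<omega>, V \<omega>))"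
    and P: "Measurable.pred (N \<Otimes>\<^sub>M N') (\<lambda>x. P (fst x) (snd x))" and Q: "Measurable.pred N Q"
    and AE_P: "AE \<omega> in M. P (W \<omega>) (V \<omega>)" and AE_Q: "AE \<omega> in M. Q (W \<omega>)"
  obtains w where "w \<in> space N" and "Q w" and "AE \<omega> in M. P w (V \<omega>)"
proof -
  interpret DW: prob_space "distr M N W" using W by (rule prob_space_distr)
  interpret DV: prob_space "distr M N' V" using V by (rule prob_space_distr)
  interpret pair_prob_space "distr M N W" "distr M N' V" ..
  have "AE x in distr M N W \<Otimes>\<^sub>M distr M N' V. P (fst x) (snd x)"
    unfolding joint using AE_P by (subst AE_distr_iff) (auto intro: measurable_Pair W V predE[OF P])
  moreover have sets: "sets (distr M N W \<Otimes>\<^sub>M distr M N' V) = sets (N \<Otimes>\<^sub>M N')"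
    by (intro sets_pair_measure_cong) simp_all
  ultimately have "AE w in distr M N W. AE v in distr M N' V. P w v"
    using predE[OF P] sets_eq_imp_space_eq[OF sets] by (subst AE_pair_iff) auto
  moreover have "AE w in distr M N W. Q w"
    using AE_Q W Q by (subst AE_distr_iff) auto
  moreover have "AE w in distr M N W. w \<in> space N"
    by (metis AE_space space_distr)
  ultimately have "AE w in distr M N W. Q w \<and> w \<in> space N \<and> (AE v in distr M N' V. P w v)"
    by eventually_elim auto
  then obtain w where "Q w" and "w \<in> space N" and AE_w: "AE v in distr M N' V. P w v"
    using eventually_happens'[OF DW.ae_filter_bot] by blast
  have "Measurable.pred N' (P w)"
    using measurable_compose[OF measurable_Pair1'[OF \<open>w \<in> space N\<close>] P] by simp
  then have "AE \<omega> in M. P w (V \<omega>)"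
    using AE_w V by (subst (asm) AE_distr_iff) auto
  with \<open>w \<in> space N\<close> \<open>Q w\<close> show thesis by (rule that)
qed

lemma AE_identically_distributed:
  assumes law: "distr M N X = distr M N Y" and X: "X \<in> M \<rightarrow>\<^sub>M N" and Y: "Y \<in> M \<rightarrow>\<^sub>M N"
    and P: "Measurable.pred N P" and "AE \<omega> in M. P (X \<omega>)"
  shows "AE \<omega> in M. P (Y \<omega>)"
proof -
  have "AE x in distr M N X. P x"
    using assms(5) AE_distr_iff[OF X predE[OF P]] by simp
  then have "AE x in distr M N Y. P x"
    by (simp only: law)
  then show ?thesis
    using AE_distr_iff[OF Y predE[OF P]] by simp
qed

lemma (in prob_space) AE_section_of_innovation:
  assumes indep: "indep_vars (\<lambda>_. borel) Z UNIV" and ident: "distr M borel (Z t) = distr M borel (Z 0)"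
    and W: "W \<in> natural_filtration M Z (t - 1) \<rightarrow>\<^sub>M N"
    and P: "Measurable.pred (N \<Otimes>\<^sub>M borel) (\<lambda>x. P (fst x) (snd x))" and Q: "Measurable.pred N Q"
    and AE_P: "AE \<omega> in M. P (W \<omega>) (Z t \<omega>)" and AE_Q: "AE \<omega> in M. Q (W \<omega>)"
  obtains w where "Q w" and "AE \<omega> in M. P w (Z 0 \<omega>)"
proof -
  have Z: "random_variable borel (Z j)" for j
    using indep by (auto simp: indep_vars_def2)
  have W_M: "random_variable N W"
    using measurable_from_subalg[OF subalgebra_natural_filtration[OF Z] W] .
  have "distr M N W \<Otimes>\<^sub>M distr M borel (Z t) = distr M (N \<Otimes>\<^sub>M borel) (\<lambda>\<omega>. (W \<omega>, Z t \<omega>))"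
    using indep_set_natural_filtration[OF indep, of "t - 1" t] measurable_sets[OF W]
    by (intro distr_pair_eq_of_indep_set[OF W_M Z]) auto
  then obtain w where "w \<in> space N" and "Q w" and AE_w: "AE \<omega> in M. P w (Z t \<omega>)"
    by (rule AE_section_of_independent[OF W_M Z _ P Q AE_P AE_Q])
  moreover have "Measurable.pred borel (P w)"
    using measurable_compose[OF measurable_Pair1'[OF \<open>w \<in> space N\<close>] P] by simp
  ultimately show thesis
    using AE_identically_distributed[OF ident Z Z] that by blast
qed

section \<open>Identification of the asymmetry parameter\<close>

lemma (in prob_space) centered_non_two_point_values:
  fixes Y :: "'a \<Rightarrow> real"
  assumes int: "integrable M Y" and mean: "expectation Y = 0"
    and not_two: "\<forall>x y. prob {\<omega> \<in> space M. Y \<omega> = x \<or> Y \<omega> = y} \<noteq> 1"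
    and AE_P: "AE \<omega> in M. P (Y \<omega>)"
  obtains z1 z2 z3 where "P z1" "P z2" "P z3" "z1 > 0" "z2 < 0" "z3 \<noteq> z1" "z3 \<noteq> z2"
proof -
  have Y: "random_variable borel Y"
    using int by auto
  have not_AE_two: "\<not> (AE \<omega> in M. Y \<omega> = x \<or> Y \<omega> = y)" for x y
  proof
    assume "AE \<omega> in M. Y \<omega> = x \<or> Y \<omega> = y"
    then have "prob {\<omega> \<in> space M. Y \<omega> = x \<or> Y \<omega> = y} = 1"
      using Y by (subst prob_Collect_eq_1) auto
    with not_two show False by blast
  qed
  have pos: "\<exists>z. P z \<and> z > 0"
  proof (rule ccontr)
    assume none: "\<nexists>z. P z \<and> z > 0"
    have "AE \<omega> in M. 0 \<le> - Y \<omega>"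
      using AE_P by eventually_elim (use none in force)
    then have "AE \<omega> in M. - Y \<omega> = 0"
      using integral_nonneg_eq_0_iff_AE[OF integrable_minus[OF int]] mean by simp
    then show False
      using not_AE_two[of 0 0] by simp
  qed
  have neg: "\<exists>z. P z \<and> z < 0"
  proof (rule ccontr)
    assume none: "\<nexists>z. P z \<and> z < 0"
    have "AE \<omega> in M. 0 \<le> Y \<omega>"
      using AE_P by eventually_elim (use none in force)
    then have "AE \<omega> in M. Y \<omega> = 0"
      using integral_nonneg_eq_0_iff_AE[OF int] mean by simp
    then show False
      using not_AE_two[of 0 0] by simp
  qed
  obtain z1 z2 where "P z1" "z1 > 0" "P z2" "z2 < 0"
    using pos neg by blast
  moreover have "\<exists>z3. P z3 \<and> z3 \<noteq> z1 \<and> z3 \<noteq> z2"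
  proof (rule ccontr)
    assume none: "\<nexists>z3. P z3 \<and> z3 \<noteq> z1 \<and> z3 \<noteq> z2"
    have "AE \<omega> in M. Y \<omega> = z1 \<or> Y \<omega> = z2"
      using AE_P by eventually_elim (use none in blast)
    then show False
      using not_AE_two by blast
  qed
  ultimately show thesis
    using that by blast
qed

lemma asymmetric_square_difference_const_imp_eq:
  fixes A B g g0 C u1 u2 u3 :: real
  assumes "A \<ge> 0" and "B \<ge> 0" and "A > 0 \<or> B > 0" and "\<bar>g\<bar> \<le> 1" and "\<bar>g0\<bar> \<le> 1"
    and const: "\<And>u. u \<in> {u1, u2, u3} \<Longrightarrow> A * (\<bar>u\<bar> - g * u)\<^sup>2 - B * (\<bar>u\<bar> - g0 * u)\<^sup>2 = C"
    and "u1 > 0" and "u2 < 0" and "u3 \<noteq> u1" and "u3 \<noteq> u2"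
  shows "g = g0"
proof -
  define P where "P = A * (1 - g)\<^sup>2 - B * (1 - g0)\<^sup>2"
  define N where "N = A * (1 + g)\<^sup>2 - B * (1 + g0)\<^sup>2"
  have pos: "A * (\<bar>u\<bar> - g * u)\<^sup>2 - B * (\<bar>u\<bar> - g0 * u)\<^sup>2 = u\<^sup>2 * P" if "u \<ge> 0" for u
    using that by (simp add: P_def power2_eq_square algebra_simps)
  have neg: "A * (\<bar>u\<bar> - g * u)\<^sup>2 - B * (\<bar>u\<bar> - g0 * u)\<^sup>2 = u\<^sup>2 * N" if "u \<le> 0" for u
    using that by (simp add: N_def power2_eq_square algebra_simps)
  have C1: "u1\<^sup>2 * P = C"
    using const[of u1] pos[of u1] \<open>u1 > 0\<close> by simp
  have C2: "u2\<^sup>2 * N = C"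
    using const[of u2] neg[of u2] \<open>u2 < 0\<close> by simp
  have "P = 0 \<and> N = 0"
  proof (cases "u3 \<ge> 0")
    case True
    then have "u3\<^sup>2 * P = C" "u3\<^sup>2 \<noteq> u1\<^sup>2"
      using const[of u3] pos[of u3] \<open>u1 > 0\<close> \<open>u3 \<noteq> u1\<close> by (auto simp: power2_eq_iff)
    then have "P = 0"
      using C1 by (metis mult_right_cancel)
    then show ?thesis
      using C1 C2 \<open>u2 < 0\<close> by simp
  next
    case False
    then have "u3\<^sup>2 * N = C" "u3\<^sup>2 \<noteq> u2\<^sup>2"
      using const[of u3] neg[of u3] \<open>u2 < 0\<close> \<open>u3 \<noteq> u2\<close> by (auto simp: power2_eq_iff)
    then have "N = 0"
      using C2 by (metis mult_right_cancel)
    then show ?thesis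
      using C1 C2 \<open>u1 > 0\<close> by simp
  qed
  then have minus: "A * (1 - g)\<^sup>2 = B * (1 - g0)\<^sup>2" and plus: "A * (1 + g)\<^sup>2 = B * (1 + g0)\<^sup>2"
    by (simp_all add: P_def N_def)
  have sqrt_sq: "sqrt (D * x\<^sup>2) = sqrt D * x" if "x \<ge> 0" for D x :: real
    using that by (simp add: real_sqrt_mult)
  have "1 - g \<ge> 0" "1 + g \<ge> 0" "1 - g0 \<ge> 0" "1 + g0 \<ge> 0"
    using assms(4,5) by auto
  then have "sqrt A * (1 - g) = sqrt B * (1 - g0)" and "sqrt A * (1 + g) = sqrt B * (1 + g0)"
    using minus plus sqrt_sq by (simp_all flip: sqrt_sq)
  then have "sqrt A = sqrt B"
    by (simp only: ring_distribs mult_1_right)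
  moreover have "sqrt A > 0"
    using \<open>sqrt A = sqrt B\<close> assms(1-3) by auto
  ultimately show ?thesis
    using \<open>sqrt A * (1 - g) = sqrt B * (1 - g0)\<close> by simp
qed

lemma ennreal_add_eq_imp_diff_eq:
  fixes u v :: real and c c' :: ennreal
  assumes eq: "ennreal u + c = ennreal v + c'" and "c' < \<infinity>" and "u \<ge> 0" and "v \<ge> 0"
  shows "u - v = enn2real c' - enn2real c"
proof -
  have "c < \<infinity>"
    using eq \<open>c' < \<infinity>\<close> by (metis ennreal_add_eq_top infinity_ennreal_def top.not_eq_extremum ennreal_neq_top)
  then have "u + enn2real c = v + enn2real c'"
    using arg_cong[OF eq, of enn2real] \<open>c' < \<infinity>\<close> assms(3,4) by (simp add: enn2real_plus)
  then show ?thesis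
    by linarith
qed

lemma (in prob_space) gamma_eq_of_AE_news_impact_identity:
  fixes Y :: "'a \<Rightarrow> real"
  assumes "integrable M Y" and "expectation Y = 0"
    and "\<forall>x y. prob {\<omega> \<in> space M. Y \<omega> = x \<or> Y \<omega> = y} \<noteq> 1"
    and "A \<ge> 0" and "B \<ge> 0" and "A > 0 \<or> B > 0" and "\<bar>g\<bar> \<le> 1" and "\<bar>g0\<bar> \<le> 1"
    and "s > 0" and "c0 < \<infinity>"
    and "AE \<omega> in M. ennreal (A * (\<bar>s * Y \<omega>\<bar> - g * (s * Y \<omega>))\<^sup>2) + c
                   = ennreal (B * (\<bar>s * Y \<omega>\<bar> - g0 * (s * Y \<omega>))\<^sup>2) + c0"
  shows "g = g0"
proof -
  define P where "P z \<longleftrightarrow> ennreal (A * (\<bar>s * z\<bar> - g * (s * z))\<^sup>2) + c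
                           = ennreal (B * (\<bar>s * z\<bar> - g0 * (s * z))\<^sup>2) + c0" for z
  have "AE \<omega> in M. P (Y \<omega>)"
    using assms(11) by (simp add: P_def)
  then obtain z1 z2 z3 where eq: "P z1" "P z2" "P z3" and "z1 > 0" "z2 < 0" "z3 \<noteq> z1" "z3 \<noteq> z2"
    by (rule centered_non_two_point_values[OF assms(1-3)])
  have const: "A * (\<bar>u\<bar> - g * u)\<^sup>2 - B * (\<bar>u\<bar> - g0 * u)\<^sup>2 = enn2real c0 - enn2real c"
    if "u \<in> {s * z1, s * z2, s * z3}" for u
    using that eq assms(4,5,10) unfolding P_def by (auto intro!: ennreal_add_eq_imp_diff_eq)
  have "s * z1 > 0" and "s * z2 < 0" and "s * z3 \<noteq> s * z1" and "s * z3 \<noteq> s * z2"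
    using \<open>s > 0\<close> \<open>z1 > 0\<close> \<open>z2 < 0\<close> \<open>z3 \<noteq> z1\<close> \<open>z3 \<noteq> z2\<close> by (simp_all add: mult_pos_neg)
  then show ?thesis
    using asymmetric_square_difference_const_imp_eq[OF assms(4-8) const] by blast
qed

lemma (in prob_space) gamma_eq_of_AE_innovation_identity:
  fixes Z :: "int \<Rightarrow> 'a \<Rightarrow> real" and S :: "'a \<Rightarrow> real" and C C0 :: "'a \<Rightarrow> ennreal"
  assumes indep: "indep_vars (\<lambda>_. borel) Z UNIV" and ident: "distr M borel (Z t) = distr M borel (Z 0)"
    and "integrable M (Z 0)" and "expectation (Z 0) = 0"
    and "\<forall>x y. prob {\<omega> \<in> space M. Z 0 \<omega> = x \<or> Z 0 \<omega> = y} \<noteq> 1"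
    and "A \<ge> 0" and "B \<ge> 0" and "A > 0 \<or> B > 0" and "\<bar>g\<bar> \<le> 1" and "\<bar>g0\<bar> \<le> 1"
    and [measurable]: "S \<in> borel_measurable (natural_filtration M Z (t - 1))"
      "C \<in> borel_measurable (natural_filtration M Z (t - 1))"
      "C0 \<in> borel_measurable (natural_filtration M Z (t - 1))"
    and AE: "AE \<omega> in M. S \<omega> > 0 \<and> C0 \<omega> < \<infinity> \<and>
        ennreal (A * (\<bar>S \<omega> * Z t \<omega>\<bar> - g * (S \<omega> * Z t \<omega>))\<^sup>2) + C \<omega>
      = ennreal (B * (\<bar>S \<omega> * Z t \<omega>\<bar> - g0 * (S \<omega> * Z t \<omega>))\<^sup>2) + C0 \<omega>"
  shows "g = g0"
proof -
  define R where "R w z \<longleftrightarrow> ennreal (A * (\<bar>fst w * z\<bar> - g * (fst w * z))\<^sup>2) + fst (snd w)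
      = ennreal (B * (\<bar>fst w * z\<bar> - g0 * (fst w * z))\<^sup>2) + snd (snd w)"
    for w :: "real \<times> ennreal \<times> ennreal" and z
  have W: "(\<lambda>\<omega>. (S \<omega>, C \<omega>, C0 \<omega>)) \<in> natural_filtration M Z (t - 1) \<rightarrow>\<^sub>M borel \<Otimes>\<^sub>M borel \<Otimes>\<^sub>M borel"
    by measurable
  have pred_R: "Measurable.pred ((borel \<Otimes>\<^sub>M borel \<Otimes>\<^sub>M borel) \<Otimes>\<^sub>M borel) (\<lambda>x. R (fst x) (snd x))"
    and pred_Q: "Measurable.pred (borel \<Otimes>\<^sub>M borel \<Otimes>\<^sub>M borel)
           (\<lambda>w :: real \<times> ennreal \<times> ennreal. fst w > 0 \<and> snd (snd w) < \<infinity>)"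
    unfolding R_def by measurable
  have AE_R: "AE \<omega> in M. R (S \<omega>, C \<omega>, C0 \<omega>) (Z t \<omega>)"
    and AE_Q: "AE \<omega> in M. fst (S \<omega>, C \<omega>, C0 \<omega>) > 0 \<and> snd (snd (S \<omega>, C \<omega>, C0 \<omega>)) < \<infinity>"
    using AE by (simp_all add: R_def AE_conj_iff)
  obtain w where Q: "fst w > 0 \<and> snd (snd w) < \<infinity>" and AE_w: "AE \<omega> in M. R w (Z 0 \<omega>)"
    by (rule AE_section_of_innovation[OF indep ident W pred_R pred_Q AE_R AE_Q])
  show ?thesis
    using AE_w unfolding R_def
    by (rule gamma_eq_of_AE_news_impact_identity[OF assms(3-10) conjunct1[OF Q] conjunct2[OF Q]])
qed

theorem lemma5p3:
  fixes M :: "'w measure"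
    and Z X \<sigma> :: "int \<Rightarrow> 'w \<Rightarrow> real"
    and p q :: nat
    and K :: "agarch_param set"
    and a0 b0 a b :: "nat \<Rightarrow> real"
    and g0 g :: real
  assumes prob: "prob_space M"
    and Z_indep: "prob_space.indep_vars M (\<lambda>_. borel) Z UNIV"
    and Z_ident: "\<forall>t. distr M borel (Z t) = distr M borel (Z 0)"
    and Z_int: "integrable M (Z 0)" and Z_mean: "(\<integral>\<omega>. Z 0 \<omega> \<partial>M) = 0"
    and Z_int2: "integrable M (\<lambda>\<omega>. (Z 0 \<omega>)\<^sup>2)" and Z_var: "(\<integral>\<omega>. (Z 0 \<omega>)\<^sup>2 \<partial>M) = 1"
    and Z_not_two: "\<forall>x y. measure M {\<omega> \<in> space M. Z 0 \<omega> = x \<or> Z 0 \<omega> = y} \<noteq> 1"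
    and X_meas: "\<forall>t. X t \<in> borel_measurable M"
    and \<sigma>_adapted: "\<forall>t. \<sigma> t \<in> borel_measurable (natural_filtration M Z (t - 1))"
    and \<sigma>_nonneg: "\<forall>t. \<forall>\<omega>\<in>space M. \<sigma> t \<omega> \<ge> 0"
    and X_eq: "AE \<omega> in M. \<forall>t. X t \<omega> = \<sigma> t \<omega> * Z t \<omega>"
    and \<sigma>_eq: "AE \<omega> in M. \<forall>t. (\<sigma> t \<omega>)\<^sup>2 =
                 a0 0 + (\<Sum>i=1..p. a0 i * (\<bar>X (t - int i) \<omega>\<bar> - g0 * X (t - int i) \<omega>)\<^sup>2)
                      + (\<Sum>j=1..q. b0 j * (\<sigma> (t - int j) \<omega>)\<^sup>2)"
    and stat: "strictly_stationary M (\<lambda>t \<omega>. (X t \<omega>, \<sigma> t \<omega>))"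
    and ergo: "ergodic_process M (\<lambda>t \<omega>. (X t \<omega>, \<sigma> t \<omega>))"
    and K_compact: "compact K"
    and K_sub: "K \<subseteq> agarch_param_space p q"
    and \<theta>0_in: "(a0, b0, g0) \<in> K"
    and \<theta>0_alpha: "\<exists>i\<in>{1..p}. a0 i > 0"
    and \<theta>0_last: "a0 p \<noteq> 0 \<or> b0 q \<noteq> 0"
    and \<theta>_in: "(a, b, g) \<in> K"
    and h_eq: "AE \<omega> in M. agarch_h p q X (a, b, g) 0 \<omega> = agarch_h p q X (a0, b0, g0) 0 \<omega>"
  shows "g = g0"
proof -
  interpret prob_space M by (rule prob)
  have \<theta>: "(a, b, g) \<in> agarch_param_space p q" and \<theta>0: "(a0, b0, g0) \<in> agarch_param_space p q"
    using K_sub \<theta>_in \<theta>0_in by auto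
  note \<theta>D = agarch_param_spaceD[OF \<theta>] and \<theta>0D = agarch_param_spaceD[OF \<theta>0]
  obtain k where first: "agarch_xi p q (a, b, g) (Suc k) > 0 \<or> agarch_xi p q (a0, b0, g0) (Suc k) > 0"
    and before: "\<forall>m<k. agarch_xi p q (a, b, g) (Suc m) = 0 \<and> agarch_xi p q (a0, b0, g0) (Suc m) = 0"
    by (rule agarch_xi_first_positive[OF \<theta> \<theta>0 \<theta>0_alpha])
  let ?t = "- int (Suc k)" and ?tail = "\<lambda>\<theta>. agarch_h_tail p q (\<lambda>t \<omega>. \<sigma> t \<omega> * Z t \<omega>) \<theta> k"
  have "AE \<omega> in M. \<sigma> ?t \<omega> > 0 \<and> ?tail (a0, b0, g0) \<omega> < \<infinity> \<and>
        ennreal (agarch_xi p q (a, b, g) (Suc k) * (\<bar>\<sigma> ?t \<omega> * Z ?t \<omega>\<bar> - g * (\<sigma> ?t \<omega> * Z ?t \<omega>))\<^sup>2)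
          + ?tail (a, b, g) \<omega>
      = ennreal (agarch_xi p q (a0, b0, g0) (Suc k) * (\<bar>\<sigma> ?t \<omega> * Z ?t \<omega>\<bar> - g0 * (\<sigma> ?t \<omega> * Z ?t \<omega>))\<^sup>2)
          + ?tail (a0, b0, g0) \<omega>"
    using X_eq \<sigma>_eq h_eq AE_space
  proof eventually_elim
    case (elim \<omega>)
    show ?case
      using agarch_first_lag_identity[where X = X and \<sigma> = \<sigma> and Z = Z and \<omega> = \<omega>,
          OF \<theta>0 before elim(1) _ elim(2,3)] \<sigma>_nonneg elim(4) by blast
  qed
  then show ?thesis
    by (rule gamma_eq_of_AE_innovation_identity[OF Z_indep Z_ident[rule_format] Z_int Z_mean Z_not_two
          agarch_xi_nonneg[OF \<theta>D(2,3)] agarch_xi_nonneg[OF \<theta>0D(2,3)] first \<theta>D(4) \<theta>0D(4)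
          \<sigma>_adapted[rule_format] measurable_agarch_h_tail[OF \<sigma>_adapted] measurable_agarch_h_tail[OF \<sigma>_adapted]])
qed

end
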